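(* Any solution $u^h\in C(G^h)$ of $F^{W,h}[u^h](x)=0$ for all $x\in G^h$ satisfies $$\min_{y\in G^h}g(y)\le u^h(x)\le\max_{y\in G^h}g(y)\qquad\text{for all }x\in G^h;$$ in particular it is bounded independently of $h$.
   Context: Let $\Omega\subset D=[-1,1]^n$, $h>0$, $g\in C(G^h)$. Grid: $G^h=\{x\in h\mathbb{Z}^n: x\in D\}$, $G^h_V=\Omega\cap G^h$, $\partial G^h=G^h\setminus G^h_V$; $C(G^h)$ is the set of functions $G^h\to\mathbb{R}$. A grid direction set $\mathcal{D}^W$ is a finite set of nonzero vectors of $\mathbb{Z}^n$ spanning $\mathbb{R}^n$ and closed under $v\mapsto-v$; $h$ is assumed small enough that $x\pm hv\in G^h$ for all $x\in G^h_V$, $v\in\mathcal{D}^W$. For $v\in\mathcal{D}^W$, $D^h_{vv}u(x)=\frac{u(x+hv)-2u(x)+u(x-hv)}{h^2\|v\|^2}$ ($x\in G^h_V$), $\lambda^h_{\mathcal{D}^W}[u](x)=\min_{v\in\mathcal{D}^W}D^h_{vv}u(x)$, and $F^{W,h}[u](x)=\max\{u(x)-g(x),-\lambda^h_{\mathcal{D}^W}[u](x)\}$ for $x\in G^h_V$, $F^{W,h}[u](x)=u(x)-g(x)$ for $x\in\partial G^h$. *)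

theory Defs
  imports "HOL-Analysis.Analysis"
begin

definition cubeD :: "(real^'n) set" where
  "cubeD = {x. \<forall>i. \<bar>x $ i\<bar> \<le> 1}"

definition grid :: "real \<Rightarrow> (real^'n) set" where
  "grid h = {x. (\<forall>i. \<exists>k::int. x $ i = h * of_int k)} \<inter> cubeD"

definition gridV :: "(real^'n) set \<Rightarrow> real \<Rightarrow> (real^'n) set" where
  "gridV \<Omega> h = \<Omega> \<inter> grid h"

definition gridB :: "(real^'n) set \<Rightarrow> real \<Rightarrow> (real^'n) set" where
  "gridB \<Omega> h = grid h - gridV \<Omega> h"

definition int_vec :: "real^'n \<Rightarrow> bool" where
  "int_vec v \<longleftrightarrow> (\<forall>i. v $ i \<in> \<int>)"

definition grid_direction_set :: "(real^'n) set \<Rightarrow> bool" where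
  "grid_direction_set W \<longleftrightarrow> finite W \<and> (\<forall>v\<in>W. v \<noteq> 0 \<and> int_vec v)
      \<and> span W = UNIV \<and> (\<forall>v\<in>W. - v \<in> W)"

definition Dvv :: "real \<Rightarrow> real^'n \<Rightarrow> (real^'n \<Rightarrow> real) \<Rightarrow> real^'n \<Rightarrow> real" where
  "Dvv h v u x = (u (x + h *\<^sub>R v) - 2 * u x + u (x - h *\<^sub>R v)) / (h\<^sup>2 * (norm v)\<^sup>2)"

definition lambda_h :: "real \<Rightarrow> (real^'n) set \<Rightarrow> (real^'n \<Rightarrow> real) \<Rightarrow> real^'n \<Rightarrow> real" where
  "lambda_h h W u x = Min ((\<lambda>v. Dvv h v u x) ` W)"

definition FWh :: "(real^'n) set \<Rightarrow> real \<Rightarrow> (real^'n) set \<Rightarrow> (real^'n \<Rightarrow> real)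
    \<Rightarrow> (real^'n \<Rightarrow> real) \<Rightarrow> real^'n \<Rightarrow> real" where
  "FWh \<Omega> h W g u x =
     (if x \<in> gridV \<Omega> h then max (u x - g x) (- lambda_h h W u x) else u x - g x)"

end

theory Submission
  imports Defs
begin

text \<open>
  The upper bound is immediate: \<open>F\<^sup>W\<^sup>,\<^sup>h[u] = 0\<close> forces \<open>u \<le> g\<close> at every grid point.
  For the lower bound take, among the minimum points of \<open>u\<close> on the finite grid, one of
  largest Euclidean norm. By the parallelogram law one of its neighbours \<open>x \<pm> h v\<close> is
  longer, hence not a minimum point, so every second difference \<open>D\<^sub>v\<^sub>v u\<close> there is strictly
  positive. At an interior point this makes \<open>-\<lambda>\<^sup>h[u] < 0\<close>, so in both cases the scheme
  gives \<open>u = g\<close> at this minimum point, and \<open>min g\<close> bounds \<open>u\<close> from below.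
\<close>

lemma finite_vec_components_in:
  assumes "finite S"
  shows "finite {x::'a^'n. \<forall>i. x $ i \<in> S}"
proof -
  have "{x::'a^'n. \<forall>i. x $ i \<in> S} \<subseteq> vec_lambda ` PiE UNIV (\<lambda>_. S)"
  proof
    fix x :: "'a^'n"
    assume "x \<in> {x. \<forall>i. x $ i \<in> S}"
    then have "(\<lambda>i. x $ i) \<in> PiE UNIV (\<lambda>_. S)" by auto
    then show "x \<in> vec_lambda ` PiE UNIV (\<lambda>_. S)"
      by (metis image_eqI vec_lambda_eta)
  qed
  moreover have "finite (vec_lambda ` PiE (UNIV::'n set) (\<lambda>_. S))"
    using assms by (simp add: finite_PiE)
  ultimately show ?thesis by (rule finite_subset)
qed

lemma finite_grid:
  assumes "h > 0"
  shows "finite (grid h :: (real^'n) set)"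
proof -
  define N where "N = \<lceil>1 / h\<rceil>"
  have "grid h \<subseteq> {x::real^'n. \<forall>i. x $ i \<in> (\<lambda>k. h * of_int k) ` {-N..N}}"
  proof (clarify)
    fix x :: "real^'n" and i
    assume "x \<in> grid h"
    then obtain k :: int where k: "x $ i = h * of_int k" and "\<bar>x $ i\<bar> \<le> 1"
      unfolding grid_def cubeD_def by blast
    then have "h * \<bar>of_int k\<bar> \<le> 1"
      using assms by (simp add: abs_mult)
    then have "of_int \<bar>k\<bar> \<le> 1 / h"
      using assms by (simp add: field_simps)
    also have "\<dots> \<le> of_int N"
      unfolding N_def by (rule le_of_int_ceiling)
    finally have "k \<in> {-N..N}"
      by auto
    with k show "x $ i \<in> (\<lambda>k. h * of_int k) ` {-N..N}" by blast
  qed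
  then show ?thesis
    by (rule finite_subset) (simp add: finite_vec_components_in)
qed

lemma parallelogram_law:
  fixes x w :: "'a::real_inner"
  shows "(norm (x + w))\<^sup>2 + (norm (x - w))\<^sup>2 = 2 * (norm x)\<^sup>2 + 2 * (norm w)\<^sup>2"
  by (simp add: power2_norm_eq_inner algebra_simps inner_commute)

lemma norm_less_add_or_diff:
  fixes x w :: "'a::real_inner"
  assumes "w \<noteq> 0"
  shows "norm x < norm (x + w) \<or> norm x < norm (x - w)"
proof (rule ccontr)
  assume "\<not> ?thesis"
  then have "(norm (x + w))\<^sup>2 \<le> (norm x)\<^sup>2" "(norm (x - w))\<^sup>2 \<le> (norm x)\<^sup>2"
    by (simp_all add: power_mono)
  moreover have "0 < (norm w)\<^sup>2" using assms by simp
  ultimately show False using parallelogram_law[of x w] by linarith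
qed

lemma finite_ex_min_strict_second_difference:
  fixes u :: "'a::real_inner \<Rightarrow> real"
  assumes "finite S" "S \<noteq> {}"
  obtains x where "x \<in> S" "\<And>y. y \<in> S \<Longrightarrow> u x \<le> u y"
    "\<And>w. w \<noteq> 0 \<Longrightarrow> x + w \<in> S \<Longrightarrow> x - w \<in> S \<Longrightarrow> 2 * u x < u (x + w) + u (x - w)"
proof -
  define M where "M = {y \<in> S. \<forall>z\<in>S. u y \<le> u z}"
  have "arg_min_on u S \<in> M"
    using arg_min_if_finite[OF assms, of u] arg_min_least[OF assms, of _ u]
    unfolding M_def by blast
  then have "finite M" "M \<noteq> {}"
    using assms(1) unfolding M_def by auto
  define x where "x = arg_min_on (\<lambda>y. - norm y) M"
  have "x \<in> M" and x_max: "\<And>y. y \<in> M \<Longrightarrow> norm y \<le> norm x"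
    using arg_min_if_finite(1)[OF \<open>finite M\<close> \<open>M \<noteq> {}\<close>]
      arg_min_least[OF \<open>finite M\<close> \<open>M \<noteq> {}\<close>, of _ "\<lambda>y. - norm y"]
    unfolding x_def by auto
  then have "x \<in> S" and x_min: "\<And>y. y \<in> S \<Longrightarrow> u x \<le> u y"
    unfolding M_def by auto
  moreover
  have "2 * u x < u (x + w) + u (x - w)"
    if "w \<noteq> 0" "x + w \<in> S" "x - w \<in> S" for w
  proof (rule ccontr)
    assume "\<not> ?thesis"
    with x_min[OF that(2)] x_min[OF that(3)] have "u (x + w) = u x" "u (x - w) = u x"
      by linarith+
    with x_min that have "x + w \<in> M" "x - w \<in> M"
      unfolding M_def by auto
    with x_max norm_less_add_or_diff[OF \<open>w \<noteq> 0\<close>, of x] show False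
      by force
  qed
  ultimately show thesis using that by blast
qed

lemma grid_direction_set_nonempty:
  assumes "grid_direction_set (W :: (real^'n) set)"
  shows "W \<noteq> {}"
proof
  assume "W = {}"
  with assms have "(UNIV :: (real^'n) set) = {0}"
    unfolding grid_direction_set_def by simp
  then have "axis undefined (1::real) = (0 :: real^'n)" by blast
  then show False by simp
qed

lemma Dvv_pos_iff:
  assumes "h \<noteq> 0" "v \<noteq> 0"
  shows "0 < Dvv h v u x \<longleftrightarrow> 2 * u x < u (x + h *\<^sub>R v) + u (x - h *\<^sub>R v)"
proof -
  have "0 < h\<^sup>2 * (norm v)\<^sup>2" using assms by simp
  then show ?thesis
    unfolding Dvv_def zero_less_divide_iff by auto
qed

lemma lambda_h_pos:
  assumes "finite W" "W \<noteq> {}" "\<And>v. v \<in> W \<Longrightarrow> 0 < Dvv h v u x"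
  shows "0 < lambda_h h W u x"
  using assms unfolding lambda_h_def by simp

lemma FWh_zero_imp_le:
  assumes "FWh \<Omega> h W g u x = 0"
  shows "u x \<le> g x"
  using assms unfolding FWh_def by (auto split: if_splits)

lemma FWh_zero_imp_eq:
  assumes "FWh \<Omega> h W g u x = 0"
    and "x \<in> gridV \<Omega> h \<Longrightarrow> 0 < lambda_h h W u x"
  shows "u x = g x"
  using assms unfolding FWh_def by (auto split: if_splits)

lemma FWh_solution_ex_min_on_obstacle:
  fixes u g :: "real^'n \<Rightarrow> real"
  assumes "h > 0" "grid_direction_set W"
    and "\<forall>x\<in>gridV \<Omega> h. \<forall>v\<in>W. x + h *\<^sub>R v \<in> grid h \<and> x - h *\<^sub>R v \<in> grid h"
    and "\<forall>x\<in>grid h. FWh \<Omega> h W g u x = 0"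
    and "grid h \<noteq> ({} :: (real^'n) set)"
  obtains x0 where "x0 \<in> grid h" "\<And>y. y \<in> grid h \<Longrightarrow> u x0 \<le> u y" "u x0 = g x0"
proof -
  obtain x0 where x0: "x0 \<in> grid h" and x0_min: "\<And>y. y \<in> grid h \<Longrightarrow> u x0 \<le> u y"
    and x0_convex: "\<And>w. w \<noteq> 0 \<Longrightarrow> x0 + w \<in> grid h \<Longrightarrow> x0 - w \<in> grid h
      \<Longrightarrow> 2 * u x0 < u (x0 + w) + u (x0 - w)"
    using finite_ex_min_strict_second_difference[OF finite_grid[OF \<open>h > 0\<close>] assms(5), of u]
    by blast
  have lambda_pos: "0 < lambda_h h W u x0" if "x0 \<in> gridV \<Omega> h"
  proof (rule lambda_h_pos)
    show "finite W" "W \<noteq> {}"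
      using assms(2) grid_direction_set_nonempty unfolding grid_direction_set_def by auto
    fix v assume "v \<in> W"
    with assms(2) have "v \<noteq> 0" unfolding grid_direction_set_def by blast
    with \<open>v \<in> W\<close> that assms(1,3) show "0 < Dvv h v u x0"
      by (simp add: Dvv_pos_iff x0_convex)
  qed
  have "u x0 = g x0"
    using assms(4) x0 lambda_pos by (blast intro: FWh_zero_imp_eq)
  with x0 x0_min show thesis by (rule that)
qed

theorem mainTheorem7:
  fixes \<Omega> :: "(real^'n) set" and h :: real and W :: "(real^'n) set"
    and g u :: "real^'n \<Rightarrow> real"
  assumes "\<Omega> \<subseteq> cubeD" and "h > 0"
    and "grid_direction_set W"
    and "\<forall>x\<in>gridV \<Omega> h. \<forall>v\<in>W. x + h *\<^sub>R v \<in> grid h \<and> x - h *\<^sub>R v \<in> grid h"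
    and "\<forall>x\<in>grid h. FWh \<Omega> h W g u x = 0"
  shows "\<forall>x\<in>grid h. Min (g ` grid h) \<le> u x \<and> u x \<le> Max (g ` grid h)"
proof
  fix x :: "real^'n"
  assume x: "x \<in> grid h"
  have "finite (grid h :: (real^'n) set)"
    using \<open>h > 0\<close> by (rule finite_grid)
  then have fin: "finite (g ` grid h)" by simp
  from x have "grid h \<noteq> ({} :: (real^'n) set)" by blast
  then obtain x0 where x0: "x0 \<in> grid h" "\<And>y. y \<in> grid h \<Longrightarrow> u x0 \<le> u y" "u x0 = g x0"
    using FWh_solution_ex_min_on_obstacle[OF assms(2-5)] by blast
  have "Min (g ` grid h) \<le> g x0" using fin x0(1) by simp
  also have "\<dots> \<le> u x" using x0(2)[OF x] x0(3) by simp
  finally have lower: "Min (g ` grid h) \<le> u x" .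
  have "u x \<le> g x"
    using assms(5) x by (blast intro: FWh_zero_imp_le)
  also have "\<dots> \<le> Max (g ` grid h)" using fin x by simp
  finally show "Min (g ` grid h) \<le> u x \<and> u x \<le> Max (g ` grid h)"
    using lower by simp
qed

end
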